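(* Let $q$ be an odd prime power, $\omega$ a non-square in $\mathbb F_q$, $\epsilon\in\mathbb F_{q^2}$ with $\epsilon^2=\omega$, and write $z=z_1+\epsilon z_2$ ($z_i\in\mathbb F_q$) for $z\in\mathbb F_{q^2}$. Let $\mathcal C: aX^2+bXY+cXZ+dYZ+eZ^2=0$ be a non-singular conic of $\mathrm{PG}(2,q^2)$ with $d=1$ and $b\notin\mathbb F_q$. Put $A=-a_2b_1+a_1b_2$, $B=b_2c_1-b_1c_2-a_2d_1+a_1d_2$, $C=-c_2d_1+c_1d_2+b_2e_1-b_1e_2$, $D=d_2e_1-d_1e_2$, and let $\mathcal S\subset\mathrm{PG}(3,q)$ be the cubic surface in coordinates $(t_1:t_2:X:Z)$ with equation $$2t_1t_2(b_1X+d_1Z)-(t_1^2+\omega t_2^2)(b_2X+d_2Z)+AX^3+BX^2Z+CXZ^2+DZ^3=0.$$ Let $n_0$ and $n_\infty$ be the numbers of points of $\mathrm{PG}(3,q)$ on $\mathcal S$ with $t_1=t_2=0$ and with $X=Z=0$, respectively. Then $n_\infty=q+1$ and $n_0\in\{0,1,2,3\}$. *)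

theory Defs
  imports Main
begin

text \<open>A field embedding of F_q (type 'k) into F_{q^2} (type 'K).\<close>
definition field_emb :: "('k::field \<Rightarrow> 'K::field) \<Rightarrow> bool" where
  "field_emb f \<longleftrightarrow> f 1 = 1 \<and> (\<forall>x y. f (x + y) = f x + f y) \<and> (\<forall>x y. f (x * y) = f x * f y)"

definition qel :: "('k \<Rightarrow> 'K::field) \<Rightarrow> 'K \<Rightarrow> 'k \<Rightarrow> 'k \<Rightarrow> 'K" where
  "qel f eps z1 z2 = f z1 + eps * f z2"

definition conic_nonsingular :: "'K::field \<Rightarrow> 'K \<Rightarrow> 'K \<Rightarrow> 'K \<Rightarrow> 'K \<Rightarrow> bool" where
  "conic_nonsingular a b c d e \<longleftrightarrow>
     \<not> (\<exists>X Y Z. (X, Y, Z) \<noteq> (0, 0, 0) \<and>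
          a * X^2 + b * X * Y + c * X * Z + d * Y * Z + e * Z^2 = 0 \<and>
          2 * a * X + b * Y + c * Z = 0 \<and>
          b * X + d * Z = 0 \<and>
          c * X + d * Y + 2 * e * Z = 0)"

text \<open>Points of PG(3,q): classes of nonzero vectors (t1,t2,X,Z) up to nonzero scalars.\<close>
definition scale4 :: "'k::field \<Rightarrow> 'k \<times> 'k \<times> 'k \<times> 'k \<Rightarrow> 'k \<times> 'k \<times> 'k \<times> 'k" where
  "scale4 l v = (case v of (t1, t2, x, z) \<Rightarrow> (l * t1, l * t2, l * x, l * z))"

definition proj_point4 :: "'k::field \<times> 'k \<times> 'k \<times> 'k \<Rightarrow> ('k \<times> 'k \<times> 'k \<times> 'k) set" where
  "proj_point4 v = {scale4 l v | l. l \<noteq> 0}"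

definition count_points4 :: "('k::field \<times> 'k \<times> 'k \<times> 'k \<Rightarrow> bool) \<Rightarrow> nat" where
  "count_points4 P = card {proj_point4 v | v. v \<noteq> (0, 0, 0, 0) \<and> P v}"

definition surfS :: "'k::field \<Rightarrow> 'k \<Rightarrow> 'k \<Rightarrow> 'k \<Rightarrow> 'k \<Rightarrow> 'k \<Rightarrow> 'k \<Rightarrow> 'k \<Rightarrow> 'k
     \<Rightarrow> 'k \<times> 'k \<times> 'k \<times> 'k \<Rightarrow> bool" where
  "surfS \<omega> b1 b2 d1 d2 A B C D v = (case v of (t1, t2, X, Z) \<Rightarrow>
     2 * t1 * t2 * (b1 * X + d1 * Z) - (t1^2 + \<omega> * t2^2) * (b2 * X + d2 * Z)
     + A * X^3 + B * X^2 * Z + C * X * Z^2 + D * Z^3 = 0)"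

end

theory Submission
  imports Defs "HOL-Computational_Algebra.Polynomial"
begin

(* On the line X = Z = 0 every term of the equation of S vanishes, so the whole line,
   q + 1 points, lies on S. On the line t1 = t2 = 0 the equation reduces to the binary
   cubic A X^3 + B X^2 Z + C X Z^2 + D Z^3, which has at most three projective zeros unless
   it vanishes identically. Writing the conic coefficients in the basis 1, epsilon of
   F_{q^2} over F_q, A = B = C = D = 0 together with d = 1 and b not in F_q forces
   a = b p, c = b r + p, e = r with p, r in F_q, i.e. the conic splits into the two lines
   b X + Z = 0 and p X + Y + r Z = 0, contradicting non-singularity. *)

lemma field_emb_hom:
  assumes "field_emb f"
  shows "f 0 = 0" and "f 1 = 1" and "f (x + y) = f x + f y" and "f (x * y) = f x * f y"
    and "f (- x) = - f x" and "f (x - y) = f x - f y"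
proof -
  have add: "\<And>x y. f (x + y) = f x + f y"
    using assms by (simp add: field_emb_def)
  show zero: "f 0 = 0"
    using add[of 0 0] by (metis add_0 add_cancel_right_right)
  have neg: "\<And>x. f (- x) = - f x"
    using add zero by (metis add.right_inverse add_eq_0_iff)
  show "f 1 = 1" "f (x + y) = f x + f y" "f (x * y) = f x * f y" "f (- x) = - f x"
    using assms neg by (simp_all add: field_emb_def)
  show "f (x - y) = f x - f y"
    using add[of x "- y"] neg[of y] by simp
qed

lemma field_emb_inj:
  assumes "field_emb f"
  shows "inj f"
proof (rule injI, rule ccontr)
  fix x y
  assume "f x = f y" and "x \<noteq> y"
  then have "f (x - y) * f (inverse (x - y)) = 0"
    by (simp add: field_emb_hom[OF assms])
  with \<open>x \<noteq> y\<close> show False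
    using field_emb_hom(2,4)[OF assms] by (metis right_inverse eq_iff_diff_eq_0 zero_neq_one)
qed

lemma field_emb_inverse:
  assumes "field_emb f" and "x \<noteq> 0"
  shows "f (inverse x) = inverse (f x)"
proof -
  have "f x * f (inverse x) = 1"
    using field_emb_hom(2,4)[OF assms(1)] assms(2) by (metis right_inverse)
  then show ?thesis by (metis inverse_unique)
qed

lemma sqrt_of_nonsquare_notin_range:
  assumes "field_emb f" and "\<not> (\<exists>x. x^2 = \<omega>)" and "\<epsilon>^2 = f \<omega>"
  shows "\<epsilon> \<notin> range f"
proof
  assume "\<epsilon> \<in> range f"
  then obtain u where "\<epsilon> = f u" by auto
  then have "f (u^2) = f \<omega>"
    using assms(3) field_emb_hom(4)[OF assms(1), of u u] by (simp add: power2_eq_square)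
  then have "u^2 = \<omega>"
    by (rule injD[OF field_emb_inj[OF assms(1)]])
  with assms(2) show False by auto
qed

lemma qel_eq_iff:
  assumes f: "field_emb f" and \<epsilon>: "\<epsilon> \<notin> range f"
  shows "qel f \<epsilon> x y = qel f \<epsilon> x' y' \<longleftrightarrow> x = x' \<and> y = y'"
proof
  assume eq: "qel f \<epsilon> x y = qel f \<epsilon> x' y'"
  note hom = field_emb_hom[OF f]
  have "y = y'"
  proof (rule ccontr)
    assume "y \<noteq> y'"
    then have ne: "y' - y \<noteq> 0" by simp
    then have "f y' - f y \<noteq> 0"
      using field_emb_inj[OF f] hom(1,6) by (metis injD)
    moreover have "\<epsilon> * (f y' - f y) = f x - f x'"
      using eq by (simp add: qel_def algebra_simps)
    ultimately have "\<epsilon> = (f x - f x') / (f y' - f y)"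
      by (simp add: field_simps)
    also have "\<dots> = f ((x - x') * inverse (y' - y))"
      using field_emb_inverse[OF f ne] by (simp add: hom(4,6) divide_inverse)
    finally show False
      using \<epsilon> by auto
  qed
  moreover from this have "x = x'"
    using eq field_emb_inj[OF f] by (simp add: qel_def injD)
  ultimately show "x = x' \<and> y = y'" by simp
qed simp

(* The conic is (b X + Z)(p X + Y + r Z) = 0; both lines pass through (1 : r b - p : -b). *)
lemma line_pair_not_conic_nonsingular:
  fixes b p r :: "'K::field"
  shows "\<not> conic_nonsingular (b * p) b (b * r + p) 1 r"
  unfolding conic_nonsingular_def
  by (rule notI, erule notE, intro exI[of _ 1] exI[of _ "r * b - p"] exI[of _ "- b"])
    (simp add: algebra_simps power2_eq_square)

lemma cubic_coeffs_zero_imp_line_pair: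
  fixes f :: "'k::field \<Rightarrow> 'K::field"
  assumes f: "field_emb f" and "d1 = 1" and "d2 = 0" and "b2 \<noteq> 0"
    and "- a2 * b1 + a1 * b2 = 0"
    and "b2 * c1 - b1 * c2 - a2 * d1 + a1 * d2 = 0"
    and "- c2 * d1 + c1 * d2 + b2 * e1 - b1 * e2 = 0"
    and "d2 * e1 - d1 * e2 = 0"
  shows "\<exists>p r. qel f \<epsilon> a1 a2 = qel f \<epsilon> b1 b2 * p \<and> qel f \<epsilon> c1 c2 = qel f \<epsilon> b1 b2 * r + p
           \<and> qel f \<epsilon> e1 e2 = r"
proof (intro exI conjI)
  define p where "p = c1 - b1 * e1"
  have e2: "e2 = 0" and c2: "c2 = b2 * e1"
    using assms by (simp_all add: algebra_simps)
  have a2: "a2 = b2 * p"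
    using assms c2 by (simp add: p_def algebra_simps)
  have "a1 * b2 = b1 * p * b2"
    using assms a2 by (simp add: algebra_simps)
  with \<open>b2 \<noteq> 0\<close> have a1: "a1 = b1 * p" by simp
  show "qel f \<epsilon> a1 a2 = qel f \<epsilon> b1 b2 * f p"
    by (simp add: qel_def a1 a2 field_emb_hom[OF f] algebra_simps)
  show "qel f \<epsilon> c1 c2 = qel f \<epsilon> b1 b2 * f e1 + f p"
    by (simp add: qel_def p_def c2 field_emb_hom[OF f] algebra_simps)
  show "qel f \<epsilon> e1 e2 = f e1"
    by (simp add: qel_def e2 field_emb_hom[OF f])
qed

lemma cubic_coeffs_not_all_zero:
  fixes f :: "'k::field \<Rightarrow> 'K::field"
  assumes f: "field_emb f" and "\<not> (\<exists>x. x^2 = \<omega>)" and "\<epsilon>^2 = f \<omega>"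
    and nonsingular: "conic_nonsingular (qel f \<epsilon> a1 a2) (qel f \<epsilon> b1 b2) (qel f \<epsilon> c1 c2)
           (qel f \<epsilon> d1 d2) (qel f \<epsilon> e1 e2)"
    and d: "qel f \<epsilon> d1 d2 = 1" and b: "qel f \<epsilon> b1 b2 \<notin> range f"
  shows "\<not> (- a2 * b1 + a1 * b2 = 0 \<and> b2 * c1 - b1 * c2 - a2 * d1 + a1 * d2 = 0 \<and>
            - c2 * d1 + c1 * d2 + b2 * e1 - b1 * e2 = 0 \<and> d2 * e1 - d1 * e2 = 0)"
proof
  assume coeffs: "- a2 * b1 + a1 * b2 = 0 \<and> b2 * c1 - b1 * c2 - a2 * d1 + a1 * d2 = 0 \<and>
            - c2 * d1 + c1 * d2 + b2 * e1 - b1 * e2 = 0 \<and> d2 * e1 - d1 * e2 = 0"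
  have \<epsilon>: "\<epsilon> \<notin> range f"
    using sqrt_of_nonsquare_notin_range assms(1-3) .
  have "qel f \<epsilon> d1 d2 = qel f \<epsilon> 1 0"
    using d field_emb_hom[OF f] by (simp add: qel_def)
  then have "d1 = 1" "d2 = 0"
    using qel_eq_iff[OF f \<epsilon>] by simp_all
  moreover have "b2 \<noteq> 0"
    using b field_emb_hom[OF f] by (auto simp: qel_def)
  ultimately obtain p r where
    "qel f \<epsilon> a1 a2 = qel f \<epsilon> b1 b2 * p" "qel f \<epsilon> c1 c2 = qel f \<epsilon> b1 b2 * r + p"
    "qel f \<epsilon> e1 e2 = r"
    using cubic_coeffs_zero_imp_line_pair[OF f] coeffs by metis
  with nonsingular d show False
    using line_pair_not_conic_nonsingular by metis
qed

lemma scale4_scale4: "scale4 m (scale4 l v) = scale4 (m * l) v"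
  by (cases v) (simp add: scale4_def)

lemma proj_point4_scale4:
  assumes "l \<noteq> 0"
  shows "proj_point4 (scale4 l v) = proj_point4 v"
proof
  show "proj_point4 (scale4 l v) \<subseteq> proj_point4 v"
    using assms by (auto simp: proj_point4_def scale4_scale4)
  show "proj_point4 v \<subseteq> proj_point4 (scale4 l v)"
  proof
    fix u
    assume "u \<in> proj_point4 v"
    then obtain m where "m \<noteq> 0" "u = scale4 m v"
      by (auto simp: proj_point4_def)
    with assms have "u = scale4 (m / l) (scale4 l v)" and "m / l \<noteq> 0"
      by (simp_all add: scale4_scale4)
    then show "u \<in> proj_point4 (scale4 l v)"
      by (auto simp: proj_point4_def)
  qed
qed

lemma proj_point4_self: "v \<in> proj_point4 v"
  unfolding proj_point4_def
  by (rule CollectI, rule exI[of _ 1]) (cases v, simp add: scale4_def)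

lemma proj_point4_eqD:
  assumes "proj_point4 v = proj_point4 w"
  shows "\<exists>l. l \<noteq> 0 \<and> v = scale4 l w"
proof -
  have "v \<in> proj_point4 w"
    using proj_point4_self assms by metis
  then show ?thesis
    by (auto simp: proj_point4_def)
qed

lemma count_points4_line:
  "count_points4 (\<lambda>(t1, t2, X, Z). X = 0 \<and> Z = (0::'k::{finite,field}))
     = card (UNIV :: 'k set) + 1"
proof -
  let ?affine = "\<lambda>t::'k. proj_point4 (1, t, 0, 0)"
  have points: "{proj_point4 v | v. v \<noteq> (0, 0, 0, 0) \<and> (\<lambda>(t1, t2, X, Z). X = 0 \<and> Z = 0) v}
      = insert (proj_point4 (0, 1, 0, 0)) (range ?affine)" (is "?L = ?R")
  proof
    show "?L \<subseteq> ?R"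
    proof
      fix P
      assume "P \<in> ?L"
      then obtain t1 t2 where P: "P = proj_point4 (t1, t2, 0, 0)" and "(t1, t2) \<noteq> (0, 0)"
        by auto
      show "P \<in> ?R"
      proof (cases "t1 = 0")
        case True
        then have "P = proj_point4 (scale4 t2 (0, 1, 0, 0))"
          using P by (simp add: scale4_def)
        with True \<open>(t1, t2) \<noteq> (0, 0)\<close> show ?thesis
          by (simp add: proj_point4_scale4)
      next
        case False
        then have "P = proj_point4 (scale4 t1 (1, t2 / t1, 0, 0))"
          using P by (simp add: scale4_def)
        with False show ?thesis
          by (simp add: proj_point4_scale4)
      qed
    qed
    show "?R \<subseteq> ?L" by force
  qed
  have "inj ?affine"
    by (rule injI) (auto dest!: proj_point4_eqD simp: scale4_def)
  moreover have "proj_point4 (0, 1, 0, 0) \<notin> range ?affine"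
    by (auto dest!: proj_point4_eqD simp: scale4_def)
  ultimately show ?thesis
    unfolding count_points4_def points by (simp add: card_image)
qed

lemma binary_cubic_points_subset:
  fixes A B C D :: "'k::field"
  shows "{proj_point4 v | v. v \<noteq> (0, 0, 0, 0) \<and> (\<lambda>(t1, t2, X, Z).
           t1 = 0 \<and> t2 = 0 \<and> A * X^3 + B * X^2 * Z + C * X * Z^2 + D * Z^3 = 0) v}
    \<subseteq> (if A = 0 then {proj_point4 (0, 0, 1, 0)} else {})
      \<union> (\<lambda>x. proj_point4 (0, 0, x, 1)) ` {x. poly [:D, C, B, A:] x = 0}"
    (is "?L \<subseteq> ?at_infinity \<union> ?affine ` ?roots")
proof
  fix P
  assume "P \<in> ?L"
  then obtain X Z where P: "P = proj_point4 (0, 0, X, Z)" and "(X, Z) \<noteq> (0, 0)"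
    and cubic: "A * X^3 + B * X^2 * Z + C * X * Z^2 + D * Z^3 = 0"
    by auto
  show "P \<in> ?at_infinity \<union> ?affine ` ?roots"
  proof (cases "Z = 0")
    case True
    with \<open>(X, Z) \<noteq> (0, 0)\<close> cubic have "X \<noteq> 0" "A = 0" by simp_all
    moreover have "P = proj_point4 (scale4 X (0, 0, 1, 0))"
      using P True by (simp add: scale4_def)
    ultimately show ?thesis
      by (simp add: proj_point4_scale4)
  next
    case False
    have "Z^3 * poly [:D, C, B, A:] (X / Z) = A * X^3 + B * X^2 * Z + C * X * Z^2 + D * Z^3"
      using False by (simp add: field_simps power2_eq_square power3_eq_cube)
    with False cubic have "X / Z \<in> ?roots"
      by simp
    moreover have "P = proj_point4 (scale4 Z (0, 0, X / Z, 1))"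
      using P False by (simp add: scale4_def)
    ultimately show ?thesis
      using False by (simp add: proj_point4_scale4)
  qed
qed

lemma count_points4_binary_cubic_le_3:
  fixes A B C D :: "'k::{finite,field}"
  assumes "\<not> (A = 0 \<and> B = 0 \<and> C = 0 \<and> D = 0)"
  shows "count_points4 (\<lambda>(t1, t2, X, Z).
           t1 = 0 \<and> t2 = 0 \<and> A * X^3 + B * X^2 * Z + C * X * Z^2 + D * Z^3 = 0) \<le> 3"
proof -
  define p where "p = [:D, C, B, A:]"
  define roots where "roots = {x. poly p x = 0}"
  define at_infinity where "at_infinity = (if A = 0 then {proj_point4 (0, 0, 1, 0::'k)} else {})"
  have "count_points4 (\<lambda>(t1, t2, X, Z).
           t1 = 0 \<and> t2 = 0 \<and> A * X^3 + B * X^2 * Z + C * X * Z^2 + D * Z^3 = 0)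
      \<le> card (at_infinity \<union> (\<lambda>x. proj_point4 (0, 0, x, 1)) ` roots)"
    unfolding count_points4_def p_def roots_def at_infinity_def
    by (intro card_mono binary_cubic_points_subset) simp
  also have "\<dots> \<le> card at_infinity + card ((\<lambda>x. proj_point4 (0, 0, x, 1)) ` roots)"
    by (rule card_Un_le)
  also have "\<dots> \<le> card at_infinity + card roots"
    by (simp add: card_image_le)
  also have "\<dots> \<le> (if A = 0 then 1 else 0) + degree p"
  proof -
    have "p \<noteq> 0"
      using assms by (auto simp: p_def)
    then have "card roots \<le> degree p"
      unfolding roots_def by (rule card_poly_roots_bound)
    then show ?thesis
      by (simp add: at_infinity_def)
  qed
  also have "\<dots> \<le> 3"
    by (simp add: p_def)
  finally show ?thesis .
qed

theorem mainTheorem8: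
  fixes emb :: "'k::{finite,field} \<Rightarrow> 'K::{finite,field}"
    and q :: nat and \<omega> :: 'k and \<epsilon> :: 'K
    and a1 a2 b1 b2 c1 c2 d1 d2 e1 e2 :: 'k
  assumes "card (UNIV :: 'k set) = q" and "odd q"
    and "card (UNIV :: 'K set) = q^2"
    and "field_emb emb"
    and "\<not> (\<exists>x::'k. x^2 = \<omega>)"
    and "\<epsilon>^2 = emb \<omega>"
    and "conic_nonsingular (qel emb \<epsilon> a1 a2) (qel emb \<epsilon> b1 b2) (qel emb \<epsilon> c1 c2)
           (qel emb \<epsilon> d1 d2) (qel emb \<epsilon> e1 e2)"
    and "qel emb \<epsilon> d1 d2 = 1"
    and "qel emb \<epsilon> b1 b2 \<notin> range emb"
  shows "let A = - a2 * b1 + a1 * b2;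
             B = b2 * c1 - b1 * c2 - a2 * d1 + a1 * d2;
             C = - c2 * d1 + c1 * d2 + b2 * e1 - b1 * e2;
             D = d2 * e1 - d1 * e2;
             S = surfS \<omega> b1 b2 d1 d2 A B C D;
             n0 = count_points4 (\<lambda>(t1, t2, X, Z). S (t1, t2, X, Z) \<and> t1 = 0 \<and> t2 = 0);
             ninf = count_points4 (\<lambda>(t1, t2, X, Z). S (t1, t2, X, Z) \<and> X = 0 \<and> Z = 0)
         in ninf = q + 1 \<and> n0 \<in> {0, 1, 2, 3}"
proof -
  define A where "A = - a2 * b1 + a1 * b2"
  define B where "B = b2 * c1 - b1 * c2 - a2 * d1 + a1 * d2"
  define C where "C = - c2 * d1 + c1 * d2 + b2 * e1 - b1 * e2"
  define D where "D = d2 * e1 - d1 * e2"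
  define S where "S = surfS \<omega> b1 b2 d1 d2 A B C D"
  have "(\<lambda>(t1, t2, X, Z). S (t1, t2, X, Z) \<and> X = 0 \<and> Z = 0) = (\<lambda>(t1, t2, X, Z). X = 0 \<and> Z = 0)"
    by (intro ext) (auto simp: S_def surfS_def)
  then have ninf: "count_points4 (\<lambda>(t1, t2, X, Z). S (t1, t2, X, Z) \<and> X = 0 \<and> Z = 0) = q + 1"
    using assms(1) by (simp add: count_points4_line)
  have "(\<lambda>(t1, t2, X, Z). S (t1, t2, X, Z) \<and> t1 = 0 \<and> t2 = 0)
      = (\<lambda>(t1, t2, X, Z). t1 = 0 \<and> t2 = 0 \<and> A * X^3 + B * X^2 * Z + C * X * Z^2 + D * Z^3 = 0)"
    by (intro ext) (auto simp: S_def surfS_def)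
  moreover have "\<not> (A = 0 \<and> B = 0 \<and> C = 0 \<and> D = 0)"
    unfolding A_def B_def C_def D_def using cubic_coeffs_not_all_zero assms(4-9) .
  ultimately have n0: "count_points4 (\<lambda>(t1, t2, X, Z). S (t1, t2, X, Z) \<and> t1 = 0 \<and> t2 = 0) \<le> 3"
    using count_points4_binary_cubic_le_3 by simp
  show ?thesis
    unfolding Let_def A_def[symmetric] B_def[symmetric] C_def[symmetric] D_def[symmetric]
      S_def[symmetric]
    using ninf n0 by auto
qed

end
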